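(* Let $B$ be an $n_c\times n_v$ binary matrix whose Tanner graph (the protograph) contains a cycle and has girth $g$. Let $\ell\ge1$, $N=2^\ell$, and let $H$ be the $n_cN\times n_vN$ block matrix obtained from $B$ by replacing each entry $B_{h,u}=1$ by a dyadic permutation matrix $P_{{\mathbf x}_{h,u}}$ (with arbitrary ${\mathbf x}_{h,u}\in\mathbb{F}_2^\ell$) and each entry $B_{h,u}=0$ by the $N\times N$ zero matrix. Then the girth of the Tanner graph of $H$ is at most $2g$.
   Context: Rows and columns of $N\times N$ binary matrices are indexed by $\mathbb{F}_2^\ell$ via ${\mathbf x}=(x_1,\dots,x_\ell)\leftrightarrow 1+\sum_i x_i2^{i-1}$. For ${\mathbf a}\in\mathbb{F}_2^\ell$, $P_{\mathbf a}$ is the $N\times N$ binary matrix with $(P_{\mathbf a})_{{\mathbf x},{\mathbf y}}=1$ iff ${\mathbf y}={\mathbf x}+{\mathbf a}$. The Tanner graph of a binary matrix is the bipartite graph with check nodes = rows, variable nodes = columns, edges at the $1$-entries; the girth is the length of a shortest cycle. *)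

theory Defs
  imports Main
begin

text \<open>A binary matrix is given by its entry predicate M r c (True = entry 1)
together with explicit finite sets of row indices R and column indices C.
Tanner graph: check nodes = rows, variable nodes = columns, an edge (r,c)
iff M r c.  A cycle of length 2k (k \<ge> 2) is
r_0 - c_0 - r_1 - c_1 - ... - r_{k-1} - c_{k-1} - r_0
with pairwise distinct rows and pairwise distinct columns.\<close>

definition tanner_cycle ::
  "'r set \<Rightarrow> 'c set \<Rightarrow> ('r \<Rightarrow> 'c \<Rightarrow> bool) \<Rightarrow> nat \<Rightarrow> (nat \<Rightarrow> 'r) \<Rightarrow> (nat \<Rightarrow> 'c) \<Rightarrow> bool" where
  "tanner_cycle R C M k r c \<longleftrightarrow>
     2 \<le> k \<and> inj_on r {..<k} \<and> inj_on c {..<k} \<and>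
     (\<forall>i<k. r i \<in> R \<and> c i \<in> C \<and> M (r i) (c i) \<and> M (r (Suc i mod k)) (c i))"

definition tanner_has_cycle :: "'r set \<Rightarrow> 'c set \<Rightarrow> ('r \<Rightarrow> 'c \<Rightarrow> bool) \<Rightarrow> bool" where
  "tanner_has_cycle R C M \<longleftrightarrow> (\<exists>k r c. tanner_cycle R C M k r c)"

definition tanner_girth :: "'r set \<Rightarrow> 'c set \<Rightarrow> ('r \<Rightarrow> 'c \<Rightarrow> bool) \<Rightarrow> nat" where
  "tanner_girth R C M = (LEAST n. \<exists>k r c. n = 2 * k \<and> tanner_cycle R C M k r c)"

text \<open>Vectors of F_2^l are identified with naturals in {0..<2^l} via
x \<leftrightarrow> \<Sum> x_i 2^(i-1) (the paper's index minus 1); vector addition is bitwise xor.\<close>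
definition dyadic_perm :: "nat \<Rightarrow> nat \<Rightarrow> nat \<Rightarrow> bool" where
  "dyadic_perm a x y \<longleftrightarrow> y = Bit_Operations.xor x a"

text \<open>Lifted matrix H: block row h, block column u, inner indices x, y.
Row index (h,x) corresponds to the flat row h*N + x.\<close>
definition dyadic_lift ::
  "(nat \<Rightarrow> nat \<Rightarrow> bool) \<Rightarrow> (nat \<Rightarrow> nat \<Rightarrow> nat) \<Rightarrow> nat \<times> nat \<Rightarrow> nat \<times> nat \<Rightarrow> bool" where
  "dyadic_lift B X hx uy \<longleftrightarrow>
     B (fst hx) (fst uy) \<and> dyadic_perm (X (fst hx) (fst uy)) (snd hx) (snd uy)"

end

theory Submission
  imports Defs
begin

text \<open>Walk around a shortest cycle of the protograph and lift it to H, starting at inner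
index 0. Traversing the edge (h,u) of the protograph adds the label x_{h,u} to the inner index,
so after one round the lifted walk returns to the first block row with its inner index shifted
by the sum s of the labels of all edges of the cycle. Since s + s = 0 in F_2^l, the lifted walk
closes after one round if s = 0 and after two rounds otherwise. Within one round the lifted nodes
lie in distinct blocks, and nodes of the two rounds lying in the same block differ by s in the
inner index, so the closed walk is a cycle of length g or 2g.\<close>

unbundle bit_operations_syntax

lemma xor_less_power2:
  fixes a b :: nat
  assumes "a < 2 ^ l" and "b < 2 ^ l"
  shows "a XOR b < 2 ^ l"
proof -
  have "take_bit l (a XOR b) = a XOR b"
    using assms by (simp add: take_bit_nat_eq_self)
  then show ?thesis
    by (metis take_bit_nat_less_exp)
qed

lemma xor_eq_self_iff:
  fixes a s :: nat
  shows "a XOR s = a \<longleftrightarrow> s = 0"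
proof
  assume "a XOR s = a"
  then have "a XOR (a XOR s) = 0"
    by simp
  then show "s = 0"
    by (simp flip: xor.assoc)
qed simp

primrec xor_prefix :: "(nat \<Rightarrow> nat) \<Rightarrow> nat \<Rightarrow> nat" where
  "xor_prefix d 0 = 0"
| "xor_prefix d (Suc i) = xor_prefix d i XOR d i"

lemma xor_prefix_less_power2:
  assumes "\<And>i. d i < 2 ^ l"
  shows "xor_prefix d i < 2 ^ l"
  by (induction i) (simp_all add: assms xor_less_power2)

lemma xor_prefix_shift:
  assumes "\<And>i. d (i + k) = d i"
  shows "xor_prefix d (i + k) = xor_prefix d i XOR xor_prefix d k"
  by (induction i) (simp_all add: assms ac_simps)

lemma inj_on_mod_pair_double:
  fixes v :: "nat \<Rightarrow> nat"
  assumes inj: "inj_on f {..<k}"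
    and shift: "\<And>i. v (i + k) = v i XOR s"
    and "s \<noteq> 0"
  shows "inj_on (\<lambda>i. (f (i mod k), v i)) {..<2 * k}"
proof -
  have same_index: "i = j" if "i \<le> j" "j < 2 * k" "f (i mod k) = f (j mod k)" "v i = v j" for i j
  proof -
    from that have "0 < k"
      by simp
    with inj that(3) have "j mod k = i mod k"
      by (auto simp: inj_on_def)
    then obtain q where q: "j = i + k * q"
      using \<open>i \<le> j\<close> by (rule mod_eq_nat1E)
    with \<open>j < 2 * k\<close> have "k * q < k * 2"
      by linarith
    then have "q < 2"
      by simp
    moreover have "q \<noteq> 1"
    proof
      assume "q = 1"
      then have "v i XOR s = v i"
        using shift[of i] q \<open>v i = v j\<close> by simp
      with \<open>s \<noteq> 0\<close> show False
        by (simp add: xor_eq_self_iff)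
    qed
    ultimately show "i = j"
      using q by (simp add: less_2_cases_iff)
  qed
  show ?thesis
  proof (rule inj_onI)
    fix i j
    assume "i \<in> {..<2 * k}" "j \<in> {..<2 * k}" "(f (i mod k), v i) = (f (j mod k), v j)"
    then show "i = j"
      using same_index[of i j] same_index[of j i] by (cases "i \<le> j") auto
  qed
qed

lemma tanner_cycle_periodic_edges:
  assumes "tanner_cycle Rs Cs M k r c"
  shows "r (i mod k) \<in> Rs \<and> c (i mod k) \<in> Cs \<and> M (r (i mod k)) (c (i mod k))
    \<and> M (r (Suc i mod k)) (c (i mod k))"
proof -
  have "0 < k"
    and edges: "\<And>j. j < k \<Longrightarrow> r j \<in> Rs \<and> c j \<in> Cs \<and> M (r j) (c j) \<and> M (r (Suc j mod k)) (c j)"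
    using assms by (auto simp: tanner_cycle_def)
  moreover have "Suc (i mod k) mod k = Suc i mod k"
    by (simp add: mod_Suc_eq)
  ultimately show ?thesis
    using edges[of "i mod k"] by simp
qed

lemma tanner_cycleI_closed_walk:
  assumes "2 \<le> m" and "inj_on r {..<m}" and "inj_on c {..<m}" and "r m = r 0"
    and "\<And>i. i < m \<Longrightarrow> r i \<in> Rs \<and> c i \<in> Cs \<and> M (r i) (c i) \<and> M (r (Suc i)) (c i)"
  shows "tanner_cycle Rs Cs M m r c"
proof -
  have "r (Suc i mod m) = r (Suc i)" if "i < m" for i
    using that assms(4) by (cases "Suc i = m") simp_all
  then show ?thesis
    using assms by (simp add: tanner_cycle_def)
qed

lemma tanner_girth_le:
  assumes "tanner_cycle Rs Cs M k r c"
  shows "tanner_girth Rs Cs M \<le> 2 * k"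
  unfolding tanner_girth_def by (rule Least_le) (use assms in blast)

lemma tanner_girth_attained:
  assumes "tanner_has_cycle Rs Cs M"
  shows "\<exists>k r c. tanner_girth Rs Cs M = 2 * k \<and> tanner_cycle Rs Cs M k r c"
proof -
  have "\<exists>n k r c. n = 2 * k \<and> tanner_cycle Rs Cs M k r c"
    using assms unfolding tanner_has_cycle_def by blast
  then show ?thesis
    unfolding tanner_girth_def by (rule LeastI_ex)
qed

locale protograph_cycle =
  fixes Rs Cs :: "nat set" and B :: "nat \<Rightarrow> nat \<Rightarrow> bool" and X :: "nat \<Rightarrow> nat \<Rightarrow> nat"
    and l k :: nat and r c :: "nat \<Rightarrow> nat"
  assumes cycle: "tanner_cycle Rs Cs B k r c"
    and label_bound: "\<forall>h\<in>Rs. \<forall>u\<in>Cs. X h u < 2 ^ l"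
begin

definition label_in :: "nat \<Rightarrow> nat" where
  "label_in i = X (r (i mod k)) (c (i mod k))"

definition label_out :: "nat \<Rightarrow> nat" where
  "label_out i = X (r (Suc i mod k)) (c (i mod k))"

text \<open>The inner indices of the lifted walk; row_offset k is the label sum s.\<close>

definition row_offset :: "nat \<Rightarrow> nat" where
  "row_offset = xor_prefix (\<lambda>i. label_in i XOR label_out i)"

definition col_offset :: "nat \<Rightarrow> nat" where
  "col_offset i = row_offset i XOR label_in i"

definition lifted_row :: "nat \<Rightarrow> nat \<times> nat" where
  "lifted_row i = (r (i mod k), row_offset i)"

definition lifted_col :: "nat \<Rightarrow> nat \<times> nat" where
  "lifted_col i = (c (i mod k), col_offset i)"

lemma labels_periodic: "label_in (i + k) = label_in i" "label_out (i + k) = label_out i"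
proof -
  have "Suc (i + k) mod k = Suc i mod k"
    by (metis add_Suc mod_add_self2)
  then show "label_in (i + k) = label_in i" "label_out (i + k) = label_out i"
    by (simp_all add: label_in_def label_out_def)
qed

lemma row_offset_0 [simp]: "row_offset 0 = 0"
  by (simp add: row_offset_def)

lemma row_offset_shift: "row_offset (i + k) = row_offset i XOR row_offset k"
  unfolding row_offset_def by (rule xor_prefix_shift) (simp add: labels_periodic)

lemma col_offset_shift: "col_offset (i + k) = col_offset i XOR row_offset k"
  by (simp add: col_offset_def row_offset_shift labels_periodic ac_simps)

lemma lifted_walk_edges:
  "dyadic_lift B X (lifted_row i) (lifted_col i)
    \<and> dyadic_lift B X (lifted_row (Suc i)) (lifted_col i)"
  using tanner_cycle_periodic_edges[OF cycle, of i]
  by (simp add: dyadic_lift_def dyadic_perm_def lifted_row_def lifted_col_def col_offset_def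
      row_offset_def label_in_def label_out_def xor.assoc)

lemma lifted_walk_mem:
  "lifted_row i \<in> Rs \<times> {..<2 ^ l} \<and> lifted_col i \<in> Cs \<times> {..<2 ^ l}"
proof -
  have labels: "label_in j < 2 ^ l" "label_out j < 2 ^ l" for j
    using label_bound tanner_cycle_periodic_edges[OF cycle, of j]
      tanner_cycle_periodic_edges[OF cycle, of "Suc j"]
    by (simp_all add: label_in_def label_out_def)
  then have "row_offset i < 2 ^ l"
    unfolding row_offset_def by (simp add: xor_prefix_less_power2 xor_less_power2)
  then show ?thesis
    using tanner_cycle_periodic_edges[OF cycle, of i] labels
    by (simp add: lifted_row_def lifted_col_def col_offset_def xor_less_power2)
qed

lemma lifted_cycle:
  "\<exists>m\<in>{k, 2 * k}. tanner_cycle (Rs \<times> {..<2 ^ l}) (Cs \<times> {..<2 ^ l}) (dyadic_lift B X)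
     m lifted_row lifted_col"
proof -
  have inj: "inj_on r {..<k}" "inj_on c {..<k}" and "2 \<le> k"
    using cycle by (simp_all add: tanner_cycle_def)
  have walk: "lifted_row i \<in> Rs \<times> {..<2 ^ l} \<and> lifted_col i \<in> Cs \<times> {..<2 ^ l}
      \<and> dyadic_lift B X (lifted_row i) (lifted_col i)
      \<and> dyadic_lift B X (lifted_row (Suc i)) (lifted_col i)"
    for i
    using lifted_walk_edges lifted_walk_mem by blast
  show ?thesis
  proof (cases "row_offset k = 0")
    case True
    have "tanner_cycle (Rs \<times> {..<2 ^ l}) (Cs \<times> {..<2 ^ l}) (dyadic_lift B X) k lifted_row lifted_col"
    proof (rule tanner_cycleI_closed_walk)
      show "inj_on lifted_row {..<k}" "inj_on lifted_col {..<k}"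
        using inj by (auto simp: inj_on_def lifted_row_def lifted_col_def)
      show "lifted_row k = lifted_row 0"
        using True by (simp add: lifted_row_def)
    qed (use \<open>2 \<le> k\<close> walk in blast)+
    then show ?thesis
      by blast
  next
    case False
    have "tanner_cycle (Rs \<times> {..<2 ^ l}) (Cs \<times> {..<2 ^ l}) (dyadic_lift B X) (2 * k)
        lifted_row lifted_col"
    proof (rule tanner_cycleI_closed_walk)
      show "inj_on lifted_row {..<2 * k}"
        unfolding lifted_row_def
        by (rule inj_on_mod_pair_double[where v = row_offset, OF inj(1) row_offset_shift False])
      show "inj_on lifted_col {..<2 * k}"
        unfolding lifted_col_def
        by (rule inj_on_mod_pair_double[where v = col_offset, OF inj(2) col_offset_shift False])
      have "row_offset (k + k) = 0"
        using row_offset_shift[of k] by (simp only: xor_self_eq)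
      then show "lifted_row (2 * k) = lifted_row 0"
        by (simp only: lifted_row_def mult_2 mod_self mod_0 mod_add_self2 row_offset_0)
      show "2 \<le> 2 * k"
        using \<open>2 \<le> k\<close> by simp
    qed (use walk in blast)
    then show ?thesis
      by blast
  qed
qed

end

theorem mainTheorem7:
  fixes B :: "nat \<Rightarrow> nat \<Rightarrow> bool" and X :: "nat \<Rightarrow> nat \<Rightarrow> nat"
    and nc nv l g :: nat
  assumes "tanner_has_cycle {..<nc} {..<nv} B"
    and "g = tanner_girth {..<nc} {..<nv} B"
    and "1 \<le> l"
    and "\<forall>h<nc. \<forall>u<nv. X h u < 2 ^ l"
  shows "tanner_has_cycle ({..<nc} \<times> {..<2 ^ l}) ({..<nv} \<times> {..<2 ^ l}) (dyadic_lift B X)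
    \<and> tanner_girth ({..<nc} \<times> {..<2 ^ l}) ({..<nv} \<times> {..<2 ^ l}) (dyadic_lift B X) \<le> 2 * g"
proof -
  obtain k r c where g: "g = 2 * k" and base: "tanner_cycle {..<nc} {..<nv} B k r c"
    using tanner_girth_attained[OF assms(1)] assms(2) by blast
  interpret protograph_cycle "{..<nc}" "{..<nv}" B X l k r c
    using base assms(4) by unfold_locales auto
  obtain m where "m \<in> {k, 2 * k}"
    and lifted: "tanner_cycle ({..<nc} \<times> {..<2 ^ l}) ({..<nv} \<times> {..<2 ^ l}) (dyadic_lift B X)
      m lifted_row lifted_col"
    using lifted_cycle by blast
  then show ?thesis
    using tanner_girth_le[OF lifted] g unfolding tanner_has_cycle_def by auto
qed

end
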